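(* In the discrete setting of the context, consider the semi-discrete scheme with free-surface penalty terms $$\widetilde{\mathbf{P}}^{-1}\frac{d\mathbf{Q}}{dt}=\sum_{\xi}D_{-\xi}\,\mathbf{F}_\xi(\mathbf{Q})+\sum_{\xi}\mathbf{B}^h_\xi(\mathbf{Q})+\sum_{\xi}\big(\mathbf{SAT}_{\xi,0}+\mathbf{SAT}_{\xi,n_\xi}\big),$$ where, for each $\xi\in\{q,r,s\}$, $\mathbf{SAT}_{\xi,0}$ vanishes except at grid points with $\xi$-index $0$, where it equals $\frac{1}{h^{(\xi)}_0}J\sqrt{\xi_x^2+\xi_y^2+\xi_z^2}\,(T_x,T_y,T_z,0,0,0,0,0,0)^T$, and $\mathbf{SAT}_{\xi,n_\xi}$ vanishes except at grid points with $\xi$-index $n_\xi$, where it equals $-\frac{1}{h^{(\xi)}_{n_\xi}}J\sqrt{\xi_x^2+\xi_y^2+\xi_z^2}\,(T_x,T_y,T_z,0,0,0,0,0,0)^T$; here $\mathbf{T}=\boldsymbol\sigma_{\mathrm{mat}}\mathbf{n}$, $\mathbf{n}=(\xi_x,\xi_y,\xi_z)^T/\sqrt{\xi_x^2+\xi_y^2+\xi_z^2}$ (so $J\sqrt{\xi_x^2+\xi_y^2+\xi_z^2}\,\mathbf{T}$ equals the first three entries of $\mathbf{F}_\xi(\mathbf{Q})$). Then every differentiable solution satisfies $\dfrac{dE_h}{dt}=0$.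
   Context: Discrete setting: for $\xi\in\{q,r,s\}$ fix $n_\xi\ge1$, a diagonal matrix $H_\xi=\mathrm{diag}(h^{(\xi)}_0,\dots,h^{(\xi)}_{n_\xi})$ with positive entries, and real $(n_\xi+1)\times(n_\xi+1)$ matrices $D_{+\xi},D_{-\xi}$ with $(D_{+\xi}f)^TH_\xi g+f^TH_\xi(D_{-\xi}g)=f_{n_\xi}g_{n_\xi}-f_0g_0$ for all $f,g\in\mathbb{R}^{n_\xi+1}$. A 3D grid function $f=(f_{ijk})$ has $0\le i\le n_q$, $0\le j\le n_r$, $0\le k\le n_s$; $D_{\pm q}$ acts on the index $i$, i.e. $(D_{\pm q}f)_{ijk}=\sum_{i'}(D_{\pm q})_{ii'}f_{i'jk}$, and similarly $D_{\pm r}$ on $j$ and $D_{\pm s}$ on $k$; applied to vector-valued grid functions they act componentwise. Given are grid functions $J_{ijk}>0$, for each $\xi$ metric values $(\xi_x,\xi_y,\xi_z)_{ijk}\in\mathbb{R}^3\setminus\{0\}$, density $\rho_{ijk}>0$ and symmetric positive definite $6\times6$ compliance matrices $\mathbf{S}_{ijk}$; $\widetilde{\mathbf{P}}^{-1}_{ijk}=J_{ijk}\,\mathrm{diag}(\rho_{ijk}I_3,\mathbf{S}_{ijk})$. The unknown is $\mathbf{Q}_{ijk}=(\mathbf{v},\boldsymbol\sigma)_{ijk}$ with $\mathbf{v}=(v_x,v_y,v_z)$, $\boldsymbol\sigma=(\sigma_{xx},\sigma_{yy},\sigma_{zz},\sigma_{xy},\sigma_{xz},\sigma_{yz})$, and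 $\boldsymbol\sigma_{\mathrm{mat}}$ the symmetric $3\times3$ stress matrix. Pointwise flux: $\mathbf{F}_\xi(\mathbf{Q})$ has first three entries $J(\xi_x\sigma_{xx}+\xi_y\sigma_{xy}+\xi_z\sigma_{xz})$, $J(\xi_x\sigma_{xy}+\xi_y\sigma_{yy}+\xi_z\sigma_{yz})$, $J(\xi_x\sigma_{xz}+\xi_y\sigma_{yz}+\xi_z\sigma_{zz})$ and last six entries $0$. Discrete non-conservative term: with $w_\alpha=D_{+\xi}v_\alpha$, $\mathbf{B}^h_\xi(\mathbf{Q})$ has first three entries $0$ and entries 4–9 equal to $J\xi_xw_x$, $J\xi_yw_y$, $J\xi_zw_z$, $J(\xi_yw_x+\xi_xw_y)$, $J(\xi_zw_x+\xi_xw_z)$, $J(\xi_zw_y+\xi_yw_z)$. Discrete energy: $E_h=\frac12\sum_{i,j,k}h^{(q)}_ih^{(r)}_jh^{(s)}_k\,\mathbf{Q}_{ijk}^T\widetilde{\mathbf{P}}^{-1}_{ijk}\mathbf{Q}_{ijk}$. *)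

theory Defs
  imports Complex_Main
begin

text \<open>One-dimensional grid functions on indices 0..n are functions nat => real; matrices are nat => nat => real.
 3D grid functions: nat => nat => nat => real (indices i j k).
 State vector components (index c < 9): 0 v_x, 1 v_y, 2 v_z, 3 sigma_xx, 4 sigma_yy, 5 sigma_zz,
 6 sigma_xy, 7 sigma_xz, 8 sigma_yz.
 Metric values (xi_x, xi_y, xi_z) at a point are a function nat => real on indices 0,1,2.\<close>

type_synonym mat = "nat \<Rightarrow> nat \<Rightarrow> real"
type_synonym grid = "nat \<Rightarrow> nat \<Rightarrow> nat \<Rightarrow> real"

text \<open>Summation-by-parts property of (H, D_plus, D_minus) with H = diag(h_0..h_n).\<close>
definition SBP :: "nat \<Rightarrow> (nat \<Rightarrow> real) \<Rightarrow> mat \<Rightarrow> mat \<Rightarrow> bool" where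
  "SBP n h Dp Dm \<longleftrightarrow> (\<forall>i\<le>n. h i > 0) \<and>
     (\<forall>f g :: nat \<Rightarrow> real.
        (\<Sum>i\<le>n. (\<Sum>l\<le>n. Dp i l * f l) * h i * g i)
      + (\<Sum>i\<le>n. f i * h i * (\<Sum>l\<le>n. Dm i l * g l))
      = f n * g n - f 0 * g 0)"

definition Dq :: "nat \<Rightarrow> mat \<Rightarrow> grid \<Rightarrow> grid" where
  "Dq n D f i j k = (\<Sum>l\<le>n. D i l * f l j k)"
definition Dr :: "nat \<Rightarrow> mat \<Rightarrow> grid \<Rightarrow> grid" where
  "Dr n D f i j k = (\<Sum>l\<le>n. D j l * f i l k)"
definition Ds :: "nat \<Rightarrow> mat \<Rightarrow> grid \<Rightarrow> grid" where
  "Ds n D f i j k = (\<Sum>l\<le>n. D k l * f i j l)"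

definition flux :: "real \<Rightarrow> (nat \<Rightarrow> real) \<Rightarrow> (nat \<Rightarrow> real) \<Rightarrow> nat \<Rightarrow> real" where
  "flux J m u c =
     (if c = 0 then J * (m 0 * u 3 + m 1 * u 6 + m 2 * u 7)
      else if c = 1 then J * (m 0 * u 6 + m 1 * u 4 + m 2 * u 8)
      else if c = 2 then J * (m 0 * u 7 + m 1 * u 8 + m 2 * u 5)
      else 0)"

text \<open>Pointwise non-conservative term B^h_xi, given J, m and w_alpha = (D_plus_xi v_alpha) at that point.\<close>
definition Bterm :: "real \<Rightarrow> (nat \<Rightarrow> real) \<Rightarrow> (nat \<Rightarrow> real) \<Rightarrow> nat \<Rightarrow> real" where
  "Bterm J m w c =
     (if c = 3 then J * m 0 * w 0
      else if c = 4 then J * m 1 * w 1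
      else if c = 5 then J * m 2 * w 2
      else if c = 6 then J * (m 1 * w 0 + m 0 * w 1)
      else if c = 7 then J * (m 2 * w 0 + m 0 * w 2)
      else if c = 8 then J * (m 2 * w 1 + m 1 * w 2)
      else 0)"

definition sigma_mat :: "(nat \<Rightarrow> real) \<Rightarrow> nat \<Rightarrow> nat \<Rightarrow> real" where
  "sigma_mat u a b =
     (if a = 0 \<and> b = 0 then u 3 else if a = 1 \<and> b = 1 then u 4 else if a = 2 \<and> b = 2 then u 5
      else if {a, b} = {0, 1} then u 6 else if {a, b} = {0, 2} then u 7 else if {a, b} = {1, 2} then u 8
      else 0)"

definition metric_norm :: "(nat \<Rightarrow> real) \<Rightarrow> real" where
  "metric_norm m = sqrt ((m 0)\<^sup>2 + (m 1)\<^sup>2 + (m 2)\<^sup>2)"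

definition normal :: "(nat \<Rightarrow> real) \<Rightarrow> nat \<Rightarrow> real" where
  "normal m a = m a / metric_norm m"

definition traction :: "(nat \<Rightarrow> real) \<Rightarrow> (nat \<Rightarrow> real) \<Rightarrow> nat \<Rightarrow> real" where
  "traction m u a = (\<Sum>b<3. sigma_mat u a b * normal m b)"

definition sat_vec :: "real \<Rightarrow> (nat \<Rightarrow> real) \<Rightarrow> (nat \<Rightarrow> real) \<Rightarrow> nat \<Rightarrow> real" where
  "sat_vec J m u c = (if c < 3 then J * metric_norm m * traction m u c else 0)"

text \<open>SAT_{xi,0} + SAT_{xi,n_xi} at a point whose xi-index is idx.\<close>
definition sat :: "nat \<Rightarrow> (nat \<Rightarrow> real) \<Rightarrow> nat \<Rightarrow> real \<Rightarrow> (nat \<Rightarrow> real) \<Rightarrow> (nat \<Rightarrow> real) \<Rightarrow> nat \<Rightarrow> real" where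
  "sat n h idx J m u c =
     (if idx = 0 then (1 / h 0) * sat_vec J m u c else 0)
   + (if idx = n then - ((1 / h n) * sat_vec J m u c) else 0)"

definition Pinv_apply :: "real \<Rightarrow> real \<Rightarrow> mat \<Rightarrow> (nat \<Rightarrow> real) \<Rightarrow> nat \<Rightarrow> real" where
  "Pinv_apply J rho S u c =
     (if c < 3 then J * rho * u c else J * (\<Sum>c'<6. S (c - 3) c' * u (c' + 3)))"

definition rhs ::
  "nat \<Rightarrow> nat \<Rightarrow> nat \<Rightarrow>
   (nat \<Rightarrow> real) \<Rightarrow> (nat \<Rightarrow> real) \<Rightarrow> (nat \<Rightarrow> real) \<Rightarrow>
   mat \<Rightarrow> mat \<Rightarrow> mat \<Rightarrow> mat \<Rightarrow> mat \<Rightarrow> mat \<Rightarrow> grid \<Rightarrow>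
   (nat \<Rightarrow> nat \<Rightarrow> nat \<Rightarrow> nat \<Rightarrow> real) \<Rightarrow> (nat \<Rightarrow> nat \<Rightarrow> nat \<Rightarrow> nat \<Rightarrow> real) \<Rightarrow>
   (nat \<Rightarrow> nat \<Rightarrow> nat \<Rightarrow> nat \<Rightarrow> real) \<Rightarrow>
   (nat \<Rightarrow> nat \<Rightarrow> nat \<Rightarrow> nat \<Rightarrow> real) \<Rightarrow> nat \<Rightarrow> nat \<Rightarrow> nat \<Rightarrow> nat \<Rightarrow> real" where
  "rhs nq nr ns hq hr hs Dpq Dmq Dpr Dmr Dps Dms J mq mr ms Q i j k c =
       Dq nq Dmq (\<lambda>i j k. flux (J i j k) (mq i j k) (Q i j k) c) i j k
     + Dr nr Dmr (\<lambda>i j k. flux (J i j k) (mr i j k) (Q i j k) c) i j k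
     + Ds ns Dms (\<lambda>i j k. flux (J i j k) (ms i j k) (Q i j k) c) i j k
     + Bterm (J i j k) (mq i j k) (\<lambda>a. Dq nq Dpq (\<lambda>i j k. Q i j k a) i j k) c
     + Bterm (J i j k) (mr i j k) (\<lambda>a. Dr nr Dpr (\<lambda>i j k. Q i j k a) i j k) c
     + Bterm (J i j k) (ms i j k) (\<lambda>a. Ds ns Dps (\<lambda>i j k. Q i j k a) i j k) c
     + sat nq hq i (J i j k) (mq i j k) (Q i j k) c
     + sat nr hr j (J i j k) (mr i j k) (Q i j k) c
     + sat ns hs k (J i j k) (ms i j k) (Q i j k) c"

definition energy ::
  "nat \<Rightarrow> nat \<Rightarrow> nat \<Rightarrow> (nat \<Rightarrow> real) \<Rightarrow> (nat \<Rightarrow> real) \<Rightarrow> (nat \<Rightarrow> real) \<Rightarrow>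
   grid \<Rightarrow> grid \<Rightarrow> (nat \<Rightarrow> nat \<Rightarrow> nat \<Rightarrow> mat) \<Rightarrow>
   (nat \<Rightarrow> nat \<Rightarrow> nat \<Rightarrow> nat \<Rightarrow> real) \<Rightarrow> real" where
  "energy nq nr ns hq hr hs J rho S Q =
     1/2 * (\<Sum>i\<le>nq. \<Sum>j\<le>nr. \<Sum>k\<le>ns. hq i * hr j * hs k *
        (\<Sum>c<9. Q i j k c * Pinv_apply (J i j k) (rho i j k) (S i j k) (Q i j k) c))"

end

theory Submission
  imports Defs
begin

text \<open>Since \<open>P\<^sup>-\<^sup>1\<close> is symmetric, \<open>dE\<^sub>h/dt\<close> is the \<open>H\<close>-weighted sum of \<open>Q \<cdot> rhs\<close>.
  At every point the non-conservative term is the adjoint of the flux,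
  \<open>\<Sum>\<^sub>c Q\<^sub>c B\<^sub>\<xi>(Q)\<^sub>c = \<Sum>\<^sub>\<alpha> (D\<^sub>+\<^sub>\<xi> v\<^sub>\<alpha>) F\<^sub>\<xi>(Q)\<^sub>\<alpha>\<close>, and the penalty vector is the flux itself.
  Hence along every grid line in direction \<open>\<xi>\<close> the contribution is
  \<open>v\<^sup>T H D\<^sub>- F + (D\<^sub>+ v)\<^sup>T H F + v\<^sub>0 F\<^sub>0 - v\<^sub>n F\<^sub>n\<close>, which vanishes by summation by parts.\<close>

definition sat_1d :: "nat \<Rightarrow> (nat \<Rightarrow> real) \<Rightarrow> nat \<Rightarrow> real \<Rightarrow> real" where
  "sat_1d n h i x = (if i = 0 then x / h 0 else 0) - (if i = n then x / h n else 0)"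

definition sbp_sat_density ::
  "nat \<Rightarrow> (nat \<Rightarrow> real) \<Rightarrow> mat \<Rightarrow> mat \<Rightarrow> (nat \<Rightarrow> real) \<Rightarrow> (nat \<Rightarrow> real) \<Rightarrow> nat \<Rightarrow> real" where
  "sbp_sat_density n h Dp Dm f g i =
     f i * (\<Sum>l\<le>n. Dm i l * g l) + (\<Sum>l\<le>n. Dp i l * f l) * g i + f i * sat_1d n h i (g i)"

lemma sum_sbp_sat_density_eq_0:
  assumes "SBP n h Dp Dm"
  shows "(\<Sum>i\<le>n. h i * sbp_sat_density n h Dp Dm f g i) = 0"
proof -
  from assms have h: "h 0 > 0" "h n > 0"
    and sbp: "(\<Sum>i\<le>n. (\<Sum>l\<le>n. Dp i l * f l) * h i * g i)
              + (\<Sum>i\<le>n. f i * h i * (\<Sum>l\<le>n. Dm i l * g l)) = f n * g n - f 0 * g 0"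
    unfolding SBP_def by auto
  have "(\<Sum>i\<le>n. h i * (f i * sat_1d n h i (g i)))
      = (\<Sum>i\<le>n. (if i = 0 then f 0 * g 0 else 0) - (if i = n then f n * g n else 0))"
    using h by (intro sum.cong) (auto simp: sat_1d_def algebra_simps)
  then have penalty: "(\<Sum>i\<le>n. h i * (f i * sat_1d n h i (g i))) = f 0 * g 0 - f n * g n"
    by (simp add: sum_subtractf)
  have "(\<Sum>i\<le>n. h i * sbp_sat_density n h Dp Dm f g i)
      = (\<Sum>i\<le>n. (\<Sum>l\<le>n. Dp i l * f l) * h i * g i)
        + (\<Sum>i\<le>n. f i * h i * (\<Sum>l\<le>n. Dm i l * g l))
        + (\<Sum>i\<le>n. h i * (f i * sat_1d n h i (g i)))"
    by (simp add: sbp_sat_density_def sum.distrib[symmetric] algebra_simps)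
  then show ?thesis
    using sbp penalty by simp
qed

lemma sum_sbp_sat_density_family_eq_0:
  assumes "SBP n h Dp Dm"
  shows "(\<Sum>i\<le>n. h i * (\<Sum>a\<in>A. sbp_sat_density n h Dp Dm (f a) (g a) i)) = 0"
  unfolding sum_distrib_left by (subst sum.swap) (simp add: sum_sbp_sat_density_eq_0[OF assms])

lemma Bterm_adjoint_flux: "(\<Sum>c<9. u c * Bterm J m w c) = (\<Sum>a<3. w a * flux J m u a)"
  by (simp add: eval_nat_numeral Bterm_def flux_def algebra_simps)

lemma flux_eq_0: "c \<ge> 3 \<Longrightarrow> flux J m u c = 0"
  by (simp add: flux_def)

lemma metric_norm_nonzero: "\<exists>a<3. m a \<noteq> 0 \<Longrightarrow> metric_norm m \<noteq> 0"
  unfolding metric_norm_def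
  by (auto simp: eval_nat_numeral less_Suc_eq add_nonneg_eq_0_iff)

lemma sat_vec_eq_flux: "metric_norm m \<noteq> 0 \<Longrightarrow> sat_vec J m u c = flux J m u c"
  by (cases "c < 3")
    (auto simp: sat_vec_def traction_def normal_def eval_nat_numeral sigma_mat_def flux_def
       field_simps insert_commute doubleton_eq_iff)

lemma sat_eq_sat_1d: "metric_norm m \<noteq> 0 \<Longrightarrow> sat n h i J m u c = sat_1d n h i (flux J m u c)"
  by (simp add: sat_def sat_1d_def sat_vec_eq_flux)

lemma sum_lessThan_9_split: "(\<Sum>c<9. f c) = (\<Sum>c<3. f c) + (\<Sum>a<6. f (a + 3))"
  for f :: "nat \<Rightarrow> real"
  by (simp add: eval_nat_numeral)

lemma inner_rhs_eq_sbp_sat_density: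
  assumes "metric_norm (mq i j k) \<noteq> 0" "metric_norm (mr i j k) \<noteq> 0" "metric_norm (ms i j k) \<noteq> 0"
  shows "(\<Sum>c<9. U i j k c * rhs nq nr ns hq hr hs Dpq Dmq Dpr Dmr Dps Dms J mq mr ms U i j k c)
    = (\<Sum>a<3. sbp_sat_density nq hq Dpq Dmq (\<lambda>l. U l j k a) (\<lambda>l. flux (J l j k) (mq l j k) (U l j k) a) i
           + sbp_sat_density nr hr Dpr Dmr (\<lambda>l. U i l k a) (\<lambda>l. flux (J i l k) (mr i l k) (U i l k) a) j
           + sbp_sat_density ns hs Dps Dms (\<lambda>l. U i j l a) (\<lambda>l. flux (J i j l) (ms i j l) (U i j l) a) k)"
  unfolding rhs_def distrib_left sum.distrib Bterm_adjoint_flux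
    sat_eq_sat_1d[OF assms(1)] sat_eq_sat_1d[OF assms(2)] sat_eq_sat_1d[OF assms(3)]
  by (simp add: sum_lessThan_9_split Dq_def Dr_def Ds_def flux_eq_0 sat_1d_def
      sbp_sat_density_def eval_nat_numeral algebra_simps)

lemma Pinv_apply_symmetric:
  assumes "\<And>a b. a < 6 \<Longrightarrow> b < 6 \<Longrightarrow> Sm a b = Sm b a"
  shows "(\<Sum>c<9. u c * Pinv_apply Jv r Sm v c) = (\<Sum>c<9. v c * Pinv_apply Jv r Sm u c)"
proof -
  have "(\<Sum>a<6. u (a + 3) * (Jv * (\<Sum>b<6. Sm a b * v (b + 3))))
      = Jv * (\<Sum>a<6. \<Sum>b<6. u (a + 3) * Sm a b * v (b + 3))"
    by (simp add: sum_distrib_left algebra_simps)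
  also have "\<dots> = Jv * (\<Sum>b<6. \<Sum>a<6. v (b + 3) * Sm b a * u (a + 3))"
    using assms by (subst sum.swap) (simp add: algebra_simps)
  also have "\<dots> = (\<Sum>b<6. v (b + 3) * (Jv * (\<Sum>a<6. Sm b a * u (a + 3))))"
    by (simp add: sum_distrib_left algebra_simps)
  finally show ?thesis
    by (simp add: sum_lessThan_9_split Pinv_apply_def eval_nat_numeral)
qed

lemma Pinv_apply_has_derivative:
  assumes "\<And>c. c < 9 \<Longrightarrow> ((\<lambda>\<tau>. U \<tau> c) has_real_derivative U' c) (at t)" "c < 9"
  shows "((\<lambda>\<tau>. Pinv_apply Jv r Sm (U \<tau>) c) has_real_derivative Pinv_apply Jv r Sm U' c) (at t)"
  using assms unfolding Pinv_apply_def
  by (cases "c < 3") (auto intro!: DERIV_cmult DERIV_sum)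

lemma energy_has_derivative:
  assumes S_sym: "\<And>i j k a b. i \<le> nq \<Longrightarrow> j \<le> nr \<Longrightarrow> k \<le> ns \<Longrightarrow> a < 6 \<Longrightarrow> b < 6 \<Longrightarrow>
                    S i j k a b = S i j k b a"
    and deriv: "\<And>i j k c. i \<le> nq \<Longrightarrow> j \<le> nr \<Longrightarrow> k \<le> ns \<Longrightarrow> c < 9 \<Longrightarrow>
                  ((\<lambda>\<tau>. Q \<tau> i j k c) has_real_derivative Q' i j k c) (at t)"
  shows "((\<lambda>\<tau>. energy nq nr ns hq hr hs J rho S (Q \<tau>)) has_real_derivative
           (\<Sum>i\<le>nq. \<Sum>j\<le>nr. \<Sum>k\<le>ns. hq i * hr j * hs k *
              (\<Sum>c<9. Q t i j k c * Pinv_apply (J i j k) (rho i j k) (S i j k) (Q' i j k) c))) (at t)"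
proof -
  let ?P = "\<lambda>i j k. Pinv_apply (J i j k) (rho i j k) (S i j k)"
  let ?dE = "\<lambda>i j k. \<Sum>c<9. Q' i j k c * ?P i j k (Q t i j k) c + ?P i j k (Q' i j k) c * Q t i j k c"
  have P_deriv: "((\<lambda>\<tau>. ?P i j k (Q \<tau> i j k) c) has_real_derivative ?P i j k (Q' i j k) c) (at t)"
    if "i \<le> nq" "j \<le> nr" "k \<le> ns" "c < 9" for i j k c
    using that by (intro Pinv_apply_has_derivative[where U = "\<lambda>\<tau>. Q \<tau> i j k"] deriv)
  have dE_eq: "?dE i j k = 2 * (\<Sum>c<9. Q t i j k c * ?P i j k (Q' i j k) c)"
    if "i \<le> nq" "j \<le> nr" "k \<le> ns" for i j k
  proof -
    have "(\<Sum>c<9. Q' i j k c * ?P i j k (Q t i j k) c) = (\<Sum>c<9. Q t i j k c * ?P i j k (Q' i j k) c)"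
      by (rule Pinv_apply_symmetric) (rule S_sym[OF that])
    then show ?thesis
      by (simp add: sum.distrib mult.commute[of "?P i j k (Q' i j k) _"])
  qed
  have "((\<lambda>\<tau>. energy nq nr ns hq hr hs J rho S (Q \<tau>)) has_real_derivative
          1/2 * (\<Sum>i\<le>nq. \<Sum>j\<le>nr. \<Sum>k\<le>ns. hq i * hr j * hs k * ?dE i j k)) (at t)"
    unfolding energy_def
    by (intro DERIV_cmult DERIV_sum DERIV_mult) (auto intro: deriv P_deriv)
  also have "1/2 * (\<Sum>i\<le>nq. \<Sum>j\<le>nr. \<Sum>k\<le>ns. hq i * hr j * hs k * ?dE i j k)
      = 1/2 * (\<Sum>i\<le>nq. \<Sum>j\<le>nr. \<Sum>k\<le>ns. hq i * hr j * hs k *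
           (2 * (\<Sum>c<9. Q t i j k c * ?P i j k (Q' i j k) c)))"
    using dE_eq by (intro arg_cong[where f = "(*) (1/2)"] sum.cong refl) simp
  also have "\<dots> = (\<Sum>i\<le>nq. \<Sum>j\<le>nr. \<Sum>k\<le>ns. hq i * hr j * hs k *
           (\<Sum>c<9. Q t i j k c * ?P i j k (Q' i j k) c))"
    by (simp only: mult.left_commute[of _ 2] sum_distrib_left[symmetric])
  finally show ?thesis .
qed

lemma sum3_eq_0_first:
  "(\<And>j k. (\<Sum>i\<in>A. a i * F i j k) = 0) \<Longrightarrow> (\<Sum>i\<in>A. \<Sum>j\<in>B. \<Sum>k\<in>C. a i * b j * c k * F i j k) = 0"
  for F :: "_ \<Rightarrow> _ \<Rightarrow> _ \<Rightarrow> real"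
proof -
  assume line: "\<And>j k. (\<Sum>i\<in>A. a i * F i j k) = 0"
  have "(\<Sum>i\<in>A. \<Sum>j\<in>B. \<Sum>k\<in>C. a i * b j * c k * F i j k)
      = (\<Sum>j\<in>B. \<Sum>k\<in>C. \<Sum>i\<in>A. a i * b j * c k * F i j k)"
    by (subst sum.swap, rule sum.cong[OF refl], rule sum.swap)
  also have "\<dots> = (\<Sum>j\<in>B. \<Sum>k\<in>C. b j * c k * (\<Sum>i\<in>A. a i * F i j k))"
    by (simp add: sum_distrib_left algebra_simps)
  finally show ?thesis by (simp add: line)
qed

lemma sum3_eq_0_second:
  "(\<And>i k. (\<Sum>j\<in>B. b j * F i j k) = 0) \<Longrightarrow> (\<Sum>i\<in>A. \<Sum>j\<in>B. \<Sum>k\<in>C. a i * b j * c k * F i j k) = 0"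
  for F :: "_ \<Rightarrow> _ \<Rightarrow> _ \<Rightarrow> real"
proof -
  assume line: "\<And>i k. (\<Sum>j\<in>B. b j * F i j k) = 0"
  have "(\<Sum>i\<in>A. \<Sum>j\<in>B. \<Sum>k\<in>C. a i * b j * c k * F i j k)
      = (\<Sum>i\<in>A. \<Sum>k\<in>C. a i * c k * (\<Sum>j\<in>B. b j * F i j k))"
    by (rule sum.cong[OF refl], subst sum.swap) (simp add: sum_distrib_left algebra_simps)
  then show ?thesis by (simp add: line)
qed

lemma sum3_eq_0_third:
  "(\<And>i j. (\<Sum>k\<in>C. c k * F i j k) = 0) \<Longrightarrow> (\<Sum>i\<in>A. \<Sum>j\<in>B. \<Sum>k\<in>C. a i * b j * c k * F i j k) = 0"
  for F :: "_ \<Rightarrow> _ \<Rightarrow> _ \<Rightarrow> real"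
  by (simp add: mult.assoc mult.left_commute sum_distrib_left[symmetric])

theorem theorem5p1:
  fixes nq nr ns :: nat
    and hq hr hs :: "nat \<Rightarrow> real"
    and Dpq Dmq Dpr Dmr Dps Dms :: mat
    and J rho :: grid
    and mq mr ms :: "nat \<Rightarrow> nat \<Rightarrow> nat \<Rightarrow> nat \<Rightarrow> real"
    and S :: "nat \<Rightarrow> nat \<Rightarrow> nat \<Rightarrow> mat"
    and Q Q' :: "real \<Rightarrow> nat \<Rightarrow> nat \<Rightarrow> nat \<Rightarrow> nat \<Rightarrow> real"
    and T :: "real set"
  assumes n_pos: "nq \<ge> 1" "nr \<ge> 1" "ns \<ge> 1"
    and sbp: "SBP nq hq Dpq Dmq" "SBP nr hr Dpr Dmr" "SBP ns hs Dps Dms"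
    and J_pos: "\<And>i j k. i \<le> nq \<Longrightarrow> j \<le> nr \<Longrightarrow> k \<le> ns \<Longrightarrow> J i j k > 0"
    and rho_pos: "\<And>i j k. i \<le> nq \<Longrightarrow> j \<le> nr \<Longrightarrow> k \<le> ns \<Longrightarrow> rho i j k > 0"
    and metric_nz: "\<And>i j k. i \<le> nq \<Longrightarrow> j \<le> nr \<Longrightarrow> k \<le> ns \<Longrightarrow>
                      (\<exists>a<3. mq i j k a \<noteq> 0) \<and> (\<exists>a<3. mr i j k a \<noteq> 0) \<and> (\<exists>a<3. ms i j k a \<noteq> 0)"
    and S_sym: "\<And>i j k a b. i \<le> nq \<Longrightarrow> j \<le> nr \<Longrightarrow> k \<le> ns \<Longrightarrow> a < 6 \<Longrightarrow> b < 6 \<Longrightarrow>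
                  S i j k a b = S i j k b a"
    and S_pd: "\<And>i j k x. i \<le> nq \<Longrightarrow> j \<le> nr \<Longrightarrow> k \<le> ns \<Longrightarrow> (\<exists>a<6. x a \<noteq> 0) \<Longrightarrow>
                  (\<Sum>a<6. \<Sum>b<6. x a * S i j k a b * x b) > 0"
    and T_open: "open T"
    and deriv: "\<And>t i j k c. t \<in> T \<Longrightarrow> i \<le> nq \<Longrightarrow> j \<le> nr \<Longrightarrow> k \<le> ns \<Longrightarrow> c < 9 \<Longrightarrow>
                  ((\<lambda>\<tau>. Q \<tau> i j k c) has_real_derivative Q' t i j k c) (at t)"
    and scheme: "\<And>t i j k c. t \<in> T \<Longrightarrow> i \<le> nq \<Longrightarrow> j \<le> nr \<Longrightarrow> k \<le> ns \<Longrightarrow> c < 9 \<Longrightarrow>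
                  Pinv_apply (J i j k) (rho i j k) (S i j k) (Q' t i j k) c
                  = rhs nq nr ns hq hr hs Dpq Dmq Dpr Dmr Dps Dms J mq mr ms (Q t) i j k c"
  shows "\<And>t. t \<in> T \<Longrightarrow>
           ((\<lambda>\<tau>. energy nq nr ns hq hr hs J rho S (Q \<tau>)) has_real_derivative 0) (at t)"
proof -
  fix t assume t: "t \<in> T"
  let ?dens = "\<lambda>i j k. \<Sum>a<3.
      sbp_sat_density nq hq Dpq Dmq (\<lambda>l. Q t l j k a) (\<lambda>l. flux (J l j k) (mq l j k) (Q t l j k) a) i
    + sbp_sat_density nr hr Dpr Dmr (\<lambda>l. Q t i l k a) (\<lambda>l. flux (J i l k) (mr i l k) (Q t i l k) a) j
    + sbp_sat_density ns hs Dps Dms (\<lambda>l. Q t i j l a) (\<lambda>l. flux (J i j l) (ms i j l) (Q t i j l) a) k"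
  have dens: "(\<Sum>c<9. Q t i j k c * Pinv_apply (J i j k) (rho i j k) (S i j k) (Q' t i j k) c)
      = ?dens i j k" if "i \<le> nq" "j \<le> nr" "k \<le> ns" for i j k
    using metric_nz[OF that] metric_norm_nonzero
    by (simp add: scheme[OF t that] inner_rhs_eq_sbp_sat_density)
  have "((\<lambda>\<tau>. energy nq nr ns hq hr hs J rho S (Q \<tau>)) has_real_derivative
          (\<Sum>i\<le>nq. \<Sum>j\<le>nr. \<Sum>k\<le>ns. hq i * hr j * hs k *
             (\<Sum>c<9. Q t i j k c * Pinv_apply (J i j k) (rho i j k) (S i j k) (Q' t i j k) c))) (at t)"
    by (rule energy_has_derivative[where Q' = "Q' t"]) (simp_all add: S_sym deriv t)
  also have "(\<Sum>i\<le>nq. \<Sum>j\<le>nr. \<Sum>k\<le>ns. hq i * hr j * hs k *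
               (\<Sum>c<9. Q t i j k c * Pinv_apply (J i j k) (rho i j k) (S i j k) (Q' t i j k) c))
           = (\<Sum>i\<le>nq. \<Sum>j\<le>nr. \<Sum>k\<le>ns. hq i * hr j * hs k * ?dens i j k)"
    using dens by (intro sum.cong refl) simp
  also have "\<dots> = 0"
    unfolding sum.distrib distrib_left
    by (simp add: sum3_eq_0_first sum3_eq_0_second sum3_eq_0_third
        sum_sbp_sat_density_family_eq_0 sbp)
  finally show "((\<lambda>\<tau>. energy nq nr ns hq hr hs J rho S (Q \<tau>)) has_real_derivative 0) (at t)" .
qed

end
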